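(* For every integer $n\ge0$ and every real $x$, $$x\,\mathfrak{C}_n'(x)=\sum_{k=0}^{n-1}\binom nk\mathfrak{C}_k(x)\,\mathfrak{C}_{n-k}(x).$$
   Context: For $n\ge1$ the central factorial is $x^{[n]}=x\,(x+\tfrac n2-1)(x+\tfrac n2-2)\cdots(x-\tfrac n2+1)$ (a product of $n$ factors), and $x^{[0]}=1$. The central factorial numbers of the second kind $T(n,k)$ ($0\le k\le n$) are defined by $x^n=\sum_{k=0}^n T(n,k)\,x^{[k]}$; equivalently $T(n,k)=\frac1{k!}\sum_{j=0}^k(-1)^j\binom kj\left(\frac k2-j\right)^n$, and $T(n,k)=0$ for $k>n$. The $n$th central Fubini-like polynomial is $\mathfrak{C}_n(x)=\sum_{k=0}^n k!\,T(n,k)\,x^k$. *)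

theory Defs
  imports "HOL-Analysis.Analysis"
begin

definition central_fact_T :: "nat \<Rightarrow> nat \<Rightarrow> real" where
  "central_fact_T n k =
     (if k > n then 0
      else (1 / fact k) * (\<Sum>j=0..k. (-1)^j * real (k choose j) * (real k / 2 - real j)^n))"

definition central_fubini :: "nat \<Rightarrow> real \<Rightarrow> real" where
  "central_fubini n x = (\<Sum>k=0..n. fact k * central_fact_T n k * x^k)"

end

theory Submission imports Defs begin

text \<open>
  The coefficient \<open>c(n,k) = k! T(n,k)\<close> of \<open>x\<^sup>k\<close> in \<open>\<C>\<^sub>n\<close> is \<open>((1 - E)\<^sup>k f)(0)\<close> for
  \<open>f p = (k/2 - p)\<^sup>n\<close> and \<open>E\<close> the shift \<open>f \<mapsto> f \<circ> Suc\<close>; it vanishes for \<open>k > n\<close> because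
  \<open>1 - E\<close> lowers the degree of a polynomial. As \<open>(1 - E)\<^sup>i (1 - E)\<^sup>j = (1 - E)\<^sup>i\<^sup>+\<^sup>j\<close> and the
  binomial theorem splits \<open>((i+j)/2 - (p+q))\<^sup>n\<close>, the coefficients satisfy the convolution
  \<open>\<Sum>\<^sub>k (n choose k) c(k,i) c(n-k,j) = c(n,i+j)\<close>. Multiplying out gives
  \<open>\<Sum>\<^sub>k\<^sub>\<le>\<^sub>n (n choose k) \<C>\<^sub>k \<C>\<^sub>n\<^sub>-\<^sub>k = \<Sum>\<^sub>m (m+1) c(n,m) x\<^sup>m = x \<C>\<^sub>n' + \<C>\<^sub>n\<close>, and the term
  \<open>k = n\<close> on the left is \<open>\<C>\<^sub>n\<close> because \<open>\<C>\<^sub>0 = 1\<close>.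
\<close>

text \<open>\<open>alt_diff k f = ((1 - E)\<^sup>k f)(0)\<close>.\<close>
definition alt_diff :: "nat \<Rightarrow> (nat \<Rightarrow> real) \<Rightarrow> real" where
  "alt_diff k f = (\<Sum>q\<le>k. (-1)^q * real (k choose q) * f q)"

lemma alt_diff_0 [simp]: "alt_diff 0 f = f 0"
  by (simp add: alt_diff_def)

lemma alt_diff_Suc: "alt_diff (Suc k) f = alt_diff k (\<lambda>q. f q - f (Suc q))"
proof -
  let ?S = "\<lambda>c. \<Sum>q\<le>k. (-1)^Suc q * real (c q) * f (Suc q)"
  have "alt_diff (Suc k) f = f 0 + ?S (\<lambda>q. Suc k choose Suc q)"
    unfolding alt_diff_def by (subst sum.atMost_Suc_shift) simp
  also have "\<dots> = f 0 + ?S (\<lambda>q. k choose Suc q) + ?S (\<lambda>q. k choose q)"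
    unfolding binomial_Suc_Suc of_nat_add distrib_left distrib_right sum.distrib
    by (simp add: add.assoc)
  also have "f 0 + ?S (\<lambda>q. k choose Suc q) = alt_diff k f"
  proof -
    have "alt_diff k f = (\<Sum>q\<le>Suc k. (-1)^q * real (k choose q) * f q)"
      by (simp add: alt_diff_def)
    also have "\<dots> = f 0 + ?S (\<lambda>q. k choose Suc q)"
      by (subst sum.atMost_Suc_shift) simp
    finally show ?thesis by simp
  qed
  also have "?S (\<lambda>q. k choose q) = - (\<Sum>q\<le>k. (-1)^q * real (k choose q) * f (Suc q))"
    by (simp add: sum_negf[symmetric])
  finally show ?thesis
    by (simp add: alt_diff_def right_diff_distrib sum_subtractf)
qed

lemma alt_diff_sum: "alt_diff k (\<lambda>q. \<Sum>l\<in>A. c l * F l q) = (\<Sum>l\<in>A. c l * alt_diff k (F l))"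
  unfolding alt_diff_def by (simp add: sum_distrib_left sum.swap[of _ A] mult_ac)

lemma alt_diff_mult:
  "alt_diff i f * alt_diff j g = alt_diff i (\<lambda>p. alt_diff j (\<lambda>q. f p * g q))"
  unfolding alt_diff_def sum_product by (simp add: sum_distrib_left mult_ac)

lemma alt_diff_alt_diff_add:
  "alt_diff i (\<lambda>p. alt_diff j (\<lambda>q. h (p + q))) = alt_diff (i + j) h"
  by (induction j arbitrary: h) (simp_all add: alt_diff_Suc)

lemma alt_diff_power_eq_0:
  assumes "n < k"
  shows "alt_diff k (\<lambda>q. (a - real q)^n) = 0"
  using assms
proof (induction k arbitrary: n a)
  case 0
  then show ?case by simp
next
  case (Suc k)
  have step: "(a - real q)^n - (a - real (Suc q))^n
      = (\<Sum>l<n. real (n choose l) * (a - 1 - real q)^l)" for q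
  proof -
    have "(a - real q)^n = (\<Sum>l\<le>n. real (n choose l) * (a - 1 - real q)^l)"
      using binomial_ring[of "a - 1 - real q" 1 n] by simp
    then show ?thesis
      by (simp add: lessThan_Suc_atMost[symmetric] diff_diff_eq)
  qed
  have "alt_diff (Suc k) (\<lambda>q. (a - real q)^n)
      = (\<Sum>l<n. real (n choose l) * alt_diff k (\<lambda>q. (a - 1 - real q)^l))"
    by (simp only: alt_diff_Suc step alt_diff_sum)
  also have "\<dots> = 0"
    using Suc by (intro sum.neutral) auto
  finally show ?case .
qed

definition central_fubini_coeff :: "nat \<Rightarrow> nat \<Rightarrow> real" where
  "central_fubini_coeff n k = alt_diff k (\<lambda>p. (real k / 2 - real p)^n)"

lemma central_fubini_coeff_eq_0: "n < k \<Longrightarrow> central_fubini_coeff n k = 0"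
  unfolding central_fubini_coeff_def by (rule alt_diff_power_eq_0)

lemma central_fubini_coeff_eq: "fact k * central_fact_T n k = central_fubini_coeff n k"
  using central_fubini_coeff_eq_0[of n k]
  by (auto simp: central_fact_T_def central_fubini_coeff_def alt_diff_def atLeast0AtMost)

lemma central_fubini_eq_coeff_sum:
  assumes "n \<le> N"
  shows "central_fubini n x = (\<Sum>k\<le>N. central_fubini_coeff n k * x^k)"
proof -
  have "central_fubini n x = (\<Sum>k\<le>n. central_fubini_coeff n k * x^k)"
    by (simp add: central_fubini_def central_fubini_coeff_eq atLeast0AtMost)
  also have "\<dots> = (\<Sum>k\<le>N. central_fubini_coeff n k * x^k)"
    using assms by (intro sum.mono_neutral_left) (auto simp: central_fubini_coeff_eq_0)
  finally show ?thesis .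
qed

lemma central_fubini_coeff_convolution:
  "(\<Sum>k\<le>n. real (n choose k) * (central_fubini_coeff k i * central_fubini_coeff (n - k) j))
     = central_fubini_coeff n (i + j)"
proof -
  let ?u = "\<lambda>p. real i / 2 - real p" and ?v = "\<lambda>q. real j / 2 - real q"
  have split: "(\<Sum>k\<le>n. real (n choose k) * (?u p^k * ?v q^(n - k)))
      = (real (i + j) / 2 - real (p + q))^n" for p q
  proof -
    have "(\<Sum>k\<le>n. real (n choose k) * (?u p^k * ?v q^(n - k))) = (?u p + ?v q)^n"
      by (simp only: binomial_ring mult.assoc)
    also have "?u p + ?v q = real (i + j) / 2 - real (p + q)"
      by (simp add: field_simps)
    finally show ?thesis .
  qed
  have "(\<Sum>k\<le>n. real (n choose k) * (central_fubini_coeff k i * central_fubini_coeff (n - k) j))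
      = (\<Sum>k\<le>n. real (n choose k) * alt_diff i (\<lambda>p. alt_diff j (\<lambda>q. ?u p^k * ?v q^(n - k))))"
    by (simp only: central_fubini_coeff_def alt_diff_mult)
  also have "\<dots> = alt_diff i (\<lambda>p. \<Sum>k\<le>n. real (n choose k) * alt_diff j (\<lambda>q. ?u p^k * ?v q^(n - k)))"
    by (rule alt_diff_sum[symmetric])
  also have "\<dots> = alt_diff i (\<lambda>p. alt_diff j (\<lambda>q. \<Sum>k\<le>n. real (n choose k) * (?u p^k * ?v q^(n - k))))"
    by (simp only: alt_diff_sum)
  also have "\<dots> = alt_diff (i + j) (\<lambda>r. (real (i + j) / 2 - real r)^n)"
    unfolding split by (rule alt_diff_alt_diff_add)
  finally show ?thesis
    by (simp only: central_fubini_coeff_def)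
qed

lemma sum_square_add_index:
  fixes g :: "nat \<Rightarrow> 'a::semiring_1"
  assumes "\<And>m. n < m \<Longrightarrow> g m = 0"
  shows "(\<Sum>i\<le>n. \<Sum>j\<le>n. g (i + j)) = (\<Sum>m\<le>n. of_nat (Suc m) * g m)"
proof -
  have row: "(\<Sum>j\<le>n. g (i + j)) = (\<Sum>m\<le>n. if i \<le> m then g m else 0)" for i
  proof -
    have "(\<Sum>j\<le>n. g (i + j)) = (\<Sum>m\<in>{i..i + n}. g m)"
      using sum.shift_bounds_cl_nat_ivl[of g 0 i n] by (simp add: add.commute atLeast0AtMost)
    also have "\<dots> = (\<Sum>m\<in>{i..n}. g m)"
      using assms by (intro sum.mono_neutral_right) auto
    also have "\<dots> = (\<Sum>m\<le>n. if i \<le> m then g m else 0)"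
      by (simp add: sum.If_cases) (intro sum.cong, auto)
    finally show ?thesis .
  qed
  have count: "(\<Sum>i\<le>n. if i \<le> m then g m else 0) = of_nat (Suc m) * g m" if "m \<le> n" for m
  proof -
    have "{..n} \<inter> {i. i \<le> m} = {..m}"
      using that by auto
    then show ?thesis
      by (simp add: sum.If_cases)
  qed
  have "(\<Sum>i\<le>n. \<Sum>j\<le>n. g (i + j)) = (\<Sum>i\<le>n. \<Sum>m\<le>n. if i \<le> m then g m else 0)"
    by (simp only: row)
  also have "\<dots> = (\<Sum>m\<le>n. \<Sum>i\<le>n. if i \<le> m then g m else 0)"
    by (rule sum.swap)
  also have "\<dots> = (\<Sum>m\<le>n. of_nat (Suc m) * g m)"
    by (intro sum.cong refl) (simp add: count)
  finally show ?thesis .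
qed

lemma central_fubini_binomial_convolution:
  "(\<Sum>k\<le>n. real (n choose k) * central_fubini k x * central_fubini (n - k) x)
     = (\<Sum>m\<le>n. real (Suc m) * (central_fubini_coeff n m * x^m))"
proof -
  let ?B = central_fubini_coeff
  have "(\<Sum>k\<le>n. real (n choose k) * central_fubini k x * central_fubini (n - k) x)
      = (\<Sum>k\<le>n. \<Sum>i\<le>n. \<Sum>j\<le>n. real (n choose k) * (?B k i * ?B (n - k) j) * x^(i + j))"
    by (simp add: central_fubini_eq_coeff_sum[of _ n] sum_product sum_distrib_left
                  power_add mult_ac)
  also have "\<dots> = (\<Sum>i\<le>n. \<Sum>j\<le>n. \<Sum>k\<le>n. real (n choose k) * (?B k i * ?B (n - k) j) * x^(i + j))"
    by (subst sum.swap, subst (2) sum.swap) simp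
  also have "\<dots> = (\<Sum>i\<le>n. \<Sum>j\<le>n. ?B n (i + j) * x^(i + j))"
    by (simp add: sum_distrib_right[symmetric] central_fubini_coeff_convolution)
  also have "\<dots> = (\<Sum>m\<le>n. real (Suc m) * (?B n m * x^m))"
    by (rule sum_square_add_index) (simp add: central_fubini_coeff_eq_0)
  finally show ?thesis .
qed

lemma x_times_deriv_central_fubini:
  "x * deriv (central_fubini n) x = (\<Sum>m\<le>n. real m * (central_fubini_coeff n m * x^m))"
proof -
  let ?B = central_fubini_coeff
  have "central_fubini n = (\<lambda>x. \<Sum>m\<le>n. ?B n m * x^m)"
    using central_fubini_eq_coeff_sum[of n n] by auto
  moreover have "((\<lambda>x. \<Sum>m\<le>n. ?B n m * x^m) has_field_derivative
      (\<Sum>m\<le>n. ?B n m * (real m * x^(m - 1)))) (at x)"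
    by (auto intro!: derivative_eq_intros sum.cong simp: mult_ac)
  ultimately have "deriv (central_fubini n) x = (\<Sum>m\<le>n. ?B n m * (real m * x^(m - 1)))"
    by (simp add: DERIV_imp_deriv)
  moreover have power_shift: "x * (?B n m * (real m * x^(m - 1))) = real m * (?B n m * x^m)" for m
    by (cases m) (auto simp: mult_ac)
  ultimately show ?thesis
    by (simp only: sum_distrib_left power_shift)
qed

theorem corollary6:
  fixes n :: nat and x :: real
  shows "x * deriv (central_fubini n) x =
         (\<Sum>k=0..<n. real (n choose k) * central_fubini k x * central_fubini (n - k) x)"
proof -
  let ?c = "\<lambda>m. central_fubini_coeff n m * x^m"
  have "central_fubini 0 x = 1"
    by (simp add: central_fubini_def central_fact_T_def)
  then have "(\<Sum>k=0..<n. real (n choose k) * central_fubini k x * central_fubini (n - k) x)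
      = (\<Sum>k\<le>n. real (n choose k) * central_fubini k x * central_fubini (n - k) x)
        - central_fubini n x"
    by (simp add: atLeast0LessThan lessThan_Suc_atMost[symmetric])
  also have "\<dots> = (\<Sum>m\<le>n. real (Suc m) * ?c m) - (\<Sum>m\<le>n. ?c m)"
    by (simp only: central_fubini_binomial_convolution central_fubini_eq_coeff_sum[of n n, OF order_refl])
  also have "\<dots> = (\<Sum>m\<le>n. real m * ?c m)"
    by (simp add: algebra_simps sum.distrib)
  finally show ?thesis
    by (simp only: x_times_deriv_central_fubini)
qed

end
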